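(* Let $\Omega$ be a complete separable metric space, and let $\{\mathbb{E}_{\alpha}\}_{\alpha\in\mathcal{A}}$ be a family of nonlinear expectations on $(\Omega,C_b(\Omega))$. Suppose there exists a tight sublinear expectation $\hat{\mathbb{E}}$ on $(\Omega,B_b(\Omega))$ such that for every $\alpha\in\mathcal{A}$, \[ \mathbb{E}_{\alpha}[X]-\mathbb{E}_{\alpha}[Y]\le \hat{\mathbb{E}}[X-Y],\qquad X,Y\in C_b(\Omega). \] Then $\{\mathbb{E}_{\alpha}\}_{\alpha\in\mathcal{A}}$ is weakly compact: for each sequence $\{\mathbb{E}_{\alpha_n}\}_{n=1}^{\infty}$ there exists a subsequence $\{\mathbb{E}_{\alpha_{n_i}}\}_{i=1}^{\infty}$ such that for every $\varphi\in C_b(\Omega)$, the real sequence $\{\mathbb{E}_{\alpha_{n_i}}[\varphi]\}_{i=1}^{\infty}$ is a Cauchy sequence.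
   Context: $B_b(\Omega)$ denotes the space of bounded Borel-measurable real functions on $\Omega$ and $C_b(\Omega)$ the bounded continuous real functions on $\Omega$. For a linear space $\mathcal{H}$ of real functions on $\Omega$ containing the constants, a nonlinear expectation is a functional $\mathbb{E}:\mathcal{H}\to\mathbb{R}$ with $\mathbb{E}[c]=c$ for constants $c$ and $\mathbb{E}[X]\ge\mathbb{E}[Y]$ whenever $X\ge Y$. It is a sublinear expectation if in addition $\mathbb{E}[X+Y]\le\mathbb{E}[X]+\mathbb{E}[Y]$ and $\mathbb{E}[\lambda X]=\lambda\mathbb{E}[X]$ for $\lambda\ge 0$. A sublinear expectation $\hat{\mathbb{E}}$ on $(\Omega,B_b(\Omega))$ is tight if for each $\varepsilon>0$ there is a compact $K\subset\Omega$ with $\hat{\mathbb{E}}[\mathbf{1}_{K^c}]<\varepsilon$. *)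

theory Defs
  imports "HOL-Analysis.Analysis"
begin

definition Cb :: "('a::topological_space \<Rightarrow> real) set" where
  "Cb = {f. continuous_on UNIV f \<and> bounded (range f)}"

definition Bb :: "('a::topological_space \<Rightarrow> real) set" where
  "Bb = {f. f \<in> borel_measurable borel \<and> bounded (range f)}"

text \<open>Nonlinear expectation on the function space H (only values on H matter).\<close>
definition nonlinear_expectation :: "('a \<Rightarrow> real) set \<Rightarrow> (('a \<Rightarrow> real) \<Rightarrow> real) \<Rightarrow> bool" where
  "nonlinear_expectation H E \<longleftrightarrow>
     (\<forall>c::real. E (\<lambda>_. c) = c) \<and>
     (\<forall>X\<in>H. \<forall>Y\<in>H. (\<forall>\<omega>. Y \<omega> \<le> X \<omega>) \<longrightarrow> E Y \<le> E X)"

definition sublinear_expectation :: "('a \<Rightarrow> real) set \<Rightarrow> (('a \<Rightarrow> real) \<Rightarrow> real) \<Rightarrow> bool" where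
  "sublinear_expectation H E \<longleftrightarrow>
     nonlinear_expectation H E \<and>
     (\<forall>X\<in>H. \<forall>Y\<in>H. E (\<lambda>\<omega>. X \<omega> + Y \<omega>) \<le> E X + E Y) \<and>
     (\<forall>X\<in>H. \<forall>c::real. c \<ge> 0 \<longrightarrow> E (\<lambda>\<omega>. c * X \<omega>) = c * E X)"

definition tight :: "(('a::topological_space \<Rightarrow> real) \<Rightarrow> real) \<Rightarrow> bool" where
  "tight E \<longleftrightarrow> (\<forall>\<epsilon>>0. \<exists>K. compact K \<and> E (indicator (- K)) < \<epsilon>)"

end

theory Submission
  imports Defs "HOL-Library.Diagonal_Subsequence"
begin

text \<open>
  Fix a dense sequence \<open>xs\<close>. Truncated minima of finitely many cones
  \<open>q + n * dist \<omega> (xs j)\<close> with rational heights \<open>q\<close> form a countable subset of \<open>Cb\<close> that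
  approximates any \<open>\<phi> \<in> Cb\<close> within \<open>\<delta>\<close> on a given compact set \<open>K\<close>, while staying bounded
  by \<open>sup \<bar>\<phi>\<bar> + 1\<close>. Domination by \<open>Ehat\<close> makes the approximation uniform in \<open>\<alpha>\<close>:
  \<open>\<bar>E \<alpha> \<phi> - E \<alpha> \<psi>\<bar> \<le> \<delta> + (2 sup \<bar>\<phi>\<bar> + 1) * Ehat (indicator (- K))\<close>, and tightness makes the
  last term small. A diagonal subsequence along which the \<open>E (a n)\<close> converge on the countable
  family is therefore Cauchy on all of \<open>Cb\<close>.
\<close>

section \<open>Common convergent subsequences\<close>

lemma diagonal_subseq_convergent:
  fixes f :: "nat \<Rightarrow> nat \<Rightarrow> real"
  assumes bounded: "\<And>k. Bseq (f k)"
  shows "\<exists>r. strict_mono r \<and> (\<forall>k. convergent (\<lambda>i. f k (r i)))"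
proof -
  interpret subseqs "\<lambda>k s. convergent (\<lambda>i. f k (s i))"
  proof
    fix k and s :: "nat \<Rightarrow> nat"
    obtain r where r: "strict_mono r" "monoseq (\<lambda>i. f k (s (r i)))"
      using seq_monosub[of "\<lambda>i. f k (s i)"] by blast
    have "Bseq (\<lambda>i. f k (s (r i)))"
      using Bseq_subseq[OF bounded] .
    then show "\<exists>r. strict_mono r \<and> convergent (\<lambda>i. f k ((s \<circ> r) i))"
      using r Bseq_monoseq_convergent by auto
  qed
  have "convergent (\<lambda>i. f k (diagseq i))" for k
  proof -
    have "convergent (\<lambda>i. f k ((diagseq \<circ> (+) (Suc k)) i))"
    proof (rule diagseq_holds)
      fix r s :: "nat \<Rightarrow> nat" and n assume "strict_mono r" "convergent (\<lambda>i. f n (s i))"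
      from convergent_subseq_convergent[OF this(2,1)]
      show "convergent (\<lambda>i. f n ((s \<circ> r) i))" by (simp add: o_def)
    qed
    then have "convergent (\<lambda>i. f k (diagseq (i + Suc k)))"
      by (simp add: add.commute)
    then show ?thesis
      using convergent_ignore_initial_segment by blast
  qed
  then show ?thesis
    using subseq_diagseq by blast
qed

lemma Cauchy_subseq_if_uniformly_approximable:
  fixes F :: "nat \<Rightarrow> 'x \<Rightarrow> real" and d :: "nat \<Rightarrow> 'x"
  assumes bounded: "\<And>k. Bseq (\<lambda>n. F n (d k))"
    and approx: "\<And>\<phi> \<epsilon>. \<phi> \<in> S \<Longrightarrow> 0 < \<epsilon> \<Longrightarrow> \<exists>k. \<forall>n. \<bar>F n \<phi> - F n (d k)\<bar> < \<epsilon>"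
  shows "\<exists>r. strict_mono r \<and> (\<forall>\<phi>\<in>S. Cauchy (\<lambda>i. F (r i) \<phi>))"
proof -
  obtain r where r: "strict_mono r" and conv: "\<And>k. convergent (\<lambda>i. F (r i) (d k))"
    using diagonal_subseq_convergent[of "\<lambda>k n. F n (d k)"] bounded by blast
  have "Cauchy (\<lambda>i. F (r i) \<phi>)" if \<phi>: "\<phi> \<in> S" for \<phi>
  proof (rule CauchyI)
    fix e :: real assume e: "0 < e"
    obtain k where k: "\<And>n. \<bar>F n \<phi> - F n (d k)\<bar> < e/3"
      using approx[OF \<phi>, of "e/3"] e by auto
    obtain N where N: "\<forall>m\<ge>N. \<forall>n\<ge>N. norm (F (r m) (d k) - F (r n) (d k)) < e/3"
      using CauchyD[OF convergent_Cauchy[OF conv[of k]], of "e/3"] e by auto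
    have "\<bar>F (r m) \<phi> - F (r n) \<phi>\<bar> < e" if "N \<le> m" "N \<le> n" for m n
    proof -
      have "\<bar>F (r m) (d k) - F (r n) (d k)\<bar> < e/3"
        using N that by auto
      then show ?thesis
        using k[of "r m"] k[of "r n"] by linarith
    qed
    then show "\<exists>N. \<forall>m\<ge>N. \<forall>n\<ge>N. norm (F (r m) \<phi> - F (r n) \<phi>) < e"
      by auto
  qed
  with r show ?thesis by blast
qed

section \<open>Countably many cone approximants\<close>

lemma dense_sequence_exists:
  obtains xs :: "nat \<Rightarrow> 'a::{metric_space, second_countable_topology}"
  where "closure (range xs) = UNIV"
proof -
  obtain D :: "'a set" where D: "countable D" "\<And>X. open X \<Longrightarrow> X \<noteq> {} \<Longrightarrow> \<exists>d\<in>D. d \<in> X"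
    using countable_dense_setE by blast
  have "x \<in> closure D" for x
    unfolding closure_approachable using D(2)[of "ball x _"] by (auto simp: dist_commute)
  moreover have "D \<noteq> {}"
    using D(2)[of UNIV] by auto
  ultimately have "closure (range (from_nat_into D)) = UNIV"
    using D(1) by auto
  then show thesis
    by (rule that)
qed

text \<open>
  The index \<open>(c, n, l)\<close> ranges over a countable type: \<open>c\<close> is the truncation level, \<open>n\<close> the
  common slope, and each \<open>(j, q) \<in> set l\<close> a cone of height \<open>q\<close> centred at \<open>xs j\<close>.
\<close>

fun cone_envelope :: "(nat \<Rightarrow> 'a::metric_space) \<Rightarrow> nat \<Rightarrow> real \<Rightarrow> (nat \<times> rat) list \<Rightarrow> 'a \<Rightarrow> real"
  where
    "cone_envelope xs n c [] \<omega> = c"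
  | "cone_envelope xs n c ((j, q) # l) \<omega> =
       min (real_of_rat q + real n * dist \<omega> (xs j)) (cone_envelope xs n c l \<omega>)"

definition cone_approx :: "(nat \<Rightarrow> 'a::metric_space) \<Rightarrow> rat \<times> nat \<times> (nat \<times> rat) list \<Rightarrow> 'a \<Rightarrow> real"
  where "cone_approx xs = (\<lambda>(c, n, l) \<omega>. max (- real_of_rat c) (cone_envelope xs n (real_of_rat c) l \<omega>))"

lemma continuous_on_cone_envelope: "continuous_on UNIV (cone_envelope xs n c l)"
proof (induction l)
  case (Cons p l)
  then show ?case
    by (cases p) (simp add: continuous_on_min continuous_on_add continuous_on_mult
        continuous_on_const continuous_on_dist continuous_on_id)
qed (simp add: continuous_on_const)

lemma cone_envelope_le_const: "cone_envelope xs n c l \<omega> \<le> c"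
  by (induction xs n c l \<omega> rule: cone_envelope.induct) auto

lemma cone_envelope_le:
  "(j, q) \<in> set l \<Longrightarrow> cone_envelope xs n c l \<omega> \<le> real_of_rat q + real n * dist \<omega> (xs j)"
  by (induction xs n c l \<omega> rule: cone_envelope.induct) auto

lemma cone_envelope_greatest:
  "L \<le> c \<Longrightarrow> (\<And>j q. (j, q) \<in> set l \<Longrightarrow> L \<le> real_of_rat q + real n * dist \<omega> (xs j))
    \<Longrightarrow> L \<le> cone_envelope xs n c l \<omega>"
  by (induction xs n c l \<omega> rule: cone_envelope.induct) auto

lemma abs_cone_approx_le: "\<bar>cone_approx xs (c, n, l) \<omega>\<bar> \<le> \<bar>real_of_rat c\<bar>"
  using cone_envelope_le_const[of xs n "real_of_rat c" l \<omega>]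
  by (auto simp: cone_approx_def abs_le_iff max_def simp del: abs_of_rat)

lemma cone_approx_in_Cb: "cone_approx xs t \<in> Cb"
proof (cases t)
  case (fields c n l)
  have "continuous_on UNIV (cone_approx xs t)"
    unfolding fields cone_approx_def
    by (simp add: continuous_on_max continuous_on_const continuous_on_cone_envelope)
  moreover have "bounded (range (cone_approx xs t))"
    unfolding bounded_iff fields real_norm_def using abs_cone_approx_le by blast
  ultimately show ?thesis
    unfolding Cb_def by blast
qed

text \<open>
  Here \<open>ys\<close> is a \<open>\<rho>\<close>-net of \<open>K\<close>, \<open>xs (j y)\<close> a point of the sequence near \<open>y\<close> and \<open>q y\<close> a
  rational just above \<open>\<phi> y\<close>. The slope \<open>n\<close> is small on the scale \<open>\<rho>\<close>, so the cone at a net point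
  near \<open>\<omega>\<close> bounds the envelope from above, and large on the scale \<open>\<eta>\<close> of uniform continuity,
  so that cones centred far from \<open>\<omega>\<close> stay above \<open>\<phi> \<omega>\<close>.
\<close>

lemma cone_approx_close_on_compact:
  fixes \<phi> :: "'a::metric_space \<Rightarrow> real"
  assumes bnd: "\<And>\<omega>. \<bar>\<phi> \<omega>\<bar> \<le> M" and c: "M \<le> real_of_rat c" and \<delta>: "0 < \<delta>"
    and uc: "\<And>y z. y \<in> K \<Longrightarrow> z \<in> K \<Longrightarrow> dist y z < \<eta> \<Longrightarrow> \<bar>\<phi> y - \<phi> z\<bar> < \<delta>/4"
    and \<rho>: "\<rho> \<le> \<eta>" "real n * \<rho> \<le> \<delta>/4" "2 * M \<le> real n * (\<eta> - \<rho>)"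
    and net: "set ys \<subseteq> K" "\<And>\<omega>. \<omega> \<in> K \<Longrightarrow> \<exists>y\<in>set ys. dist y \<omega> < \<rho>"
    and near: "\<And>y. y \<in> set ys \<Longrightarrow> dist (xs (j y)) y < \<rho>"
    and q: "\<And>y. y \<in> set ys \<Longrightarrow> \<phi> y < real_of_rat (q y) \<and> real_of_rat (q y) < \<phi> y + \<delta>/4"
    and \<omega>: "\<omega> \<in> K"
  shows "\<bar>\<phi> \<omega> - cone_approx xs (c, n, map (\<lambda>y. (j y, q y)) ys) \<omega>\<bar> \<le> \<delta>"
proof -
  define h where "h = cone_envelope xs n (real_of_rat c) (map (\<lambda>y. (j y, q y)) ys)"
  have upper: "h \<omega> \<le> \<phi> \<omega> + \<delta>"
  proof -
    obtain y where y: "y \<in> set ys" "dist y \<omega> < \<rho>"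
      using net(2)[OF \<omega>] by blast
    have "dist \<omega> (xs (j y)) \<le> 2 * \<rho>"
      using dist_triangle[of \<omega> "xs (j y)" y] near[OF y(1)] y(2) by (simp add: dist_commute)
    then have "real n * dist \<omega> (xs (j y)) \<le> 2 * (real n * \<rho>)"
      using mult_left_mono[of _ _ "real n"] by fastforce
    moreover have "h \<omega> \<le> real_of_rat (q y) + real n * dist \<omega> (xs (j y))"
      unfolding h_def using y(1) by (intro cone_envelope_le) auto
    moreover have "\<bar>\<phi> y - \<phi> \<omega>\<bar> < \<delta>/4"
      using uc[OF _ \<omega>, of y] net(1) y \<rho>(1) by auto
    ultimately show ?thesis
      using q[OF y(1)] \<rho>(2) by linarith
  qed
  have lower: "\<phi> \<omega> - \<delta> \<le> h \<omega>"
    unfolding h_def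
  proof (rule cone_envelope_greatest)
    show "\<phi> \<omega> - \<delta> \<le> real_of_rat c"
      using abs_le_D1[OF bnd[of \<omega>]] c \<delta> by linarith
  next
    fix i p assume "(i, p) \<in> set (map (\<lambda>y. (j y, q y)) ys)"
    then obtain y where y: "y \<in> set ys" "i = j y" "p = q y"
      by auto
    have "y \<in> K"
      using net(1) y(1) by auto
    show "\<phi> \<omega> - \<delta> \<le> real_of_rat p + real n * dist \<omega> (xs i)"
    proof (cases "dist y \<omega> < \<eta>")
      case True
      then have "\<phi> \<omega> < \<phi> y + \<delta>/4"
        using uc[OF \<open>y \<in> K\<close> \<omega> True] by linarith
      moreover have "0 \<le> real n * dist \<omega> (xs (j y))"
        by simp
      ultimately show ?thesis
        unfolding y(2,3) using q[OF y(1)] \<delta> by linarith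
    next
      case False
      then have "\<eta> - \<rho> \<le> dist \<omega> (xs (j y))"
        using dist_triangle[of y \<omega> "xs (j y)"] near[OF y(1)] by (simp add: dist_commute)
      then have "2 * M \<le> real n * dist \<omega> (xs (j y))"
        using \<rho>(3) mult_left_mono[of _ _ "real n"] by fastforce
      then show ?thesis
        using q[OF y(1)] y(2,3) bnd[of y] bnd[of \<omega>] \<delta> by (simp add: abs_le_iff)
    qed
  qed
  have "cone_approx xs (c, n, map (\<lambda>y. (j y, q y)) ys) \<omega> = max (- real_of_rat c) (h \<omega>)"
    by (simp add: cone_approx_def h_def)
  then show ?thesis
    using upper lower abs_le_D2[OF bnd[of \<omega>]] c \<delta> by (auto simp: abs_le_iff max_def)
qed

lemma cone_slope_exists:
  fixes \<eta> \<delta> M :: real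
  assumes \<eta>: "0 < \<eta>" and \<delta>: "0 < \<delta>"
  obtains n :: nat and \<rho> where "0 < \<rho>" "\<rho> \<le> \<eta>" "real n * \<rho> \<le> \<delta>/4" "2 * M \<le> real n * (\<eta> - \<rho>)"
proof -
  obtain m :: nat where "4 * M / \<eta> < real m"
    using reals_Archimedean2 by blast
  then have "4 * M < real m * \<eta>"
    using \<eta> by (simp add: pos_divide_less_eq)
  define n where "n = Suc m"
  have n: "4 * M \<le> real n * \<eta>" "0 < real n"
    using \<open>4 * M < real m * \<eta>\<close> \<eta> by (simp_all add: n_def distrib_right)
  define \<rho> where "\<rho> = min (\<eta>/2) (\<delta> / (4 * real n))"
  show thesis
  proof (rule that)
    show "0 < \<rho>" "\<rho> \<le> \<eta>"
      using \<eta> \<delta> n(2) by (simp_all add: \<rho>_def)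
    show "real n * \<rho> \<le> \<delta>/4"
      using n(2) mult_left_mono[of \<rho> "\<delta> / (4 * real n)" "real n"] by (simp add: \<rho>_def)
    have "real n * (\<eta>/2) \<le> real n * (\<eta> - \<rho>)"
      using n(2) by (intro mult_left_mono) (simp_all add: \<rho>_def)
    then show "2 * M \<le> real n * (\<eta> - \<rho>)"
      using n(1) by simp
  qed
qed

lemma exists_cone_approx:
  fixes \<phi> :: "'a::metric_space \<Rightarrow> real"
  assumes dense: "closure (range xs) = UNIV"
    and cont: "continuous_on UNIV \<phi>" and bnd: "\<And>\<omega>. \<bar>\<phi> \<omega>\<bar> \<le> M"
    and K: "compact K" and \<delta>: "0 < \<delta>"
  obtains t where "\<And>\<omega>. \<omega> \<in> K \<Longrightarrow> \<bar>\<phi> \<omega> - cone_approx xs t \<omega>\<bar> \<le> \<delta>"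
    and "\<And>\<omega>. \<bar>cone_approx xs t \<omega>\<bar> \<le> M + 1"
proof -
  define c :: rat where "c = of_int \<lceil>M\<rceil>"
  have "0 \<le> M"
    using bnd[of undefined] by linarith
  then have c: "M \<le> real_of_rat c" "\<bar>real_of_rat c\<bar> \<le> M + 1"
    unfolding c_def by (simp_all add: le_of_int_ceiling)
  have "uniformly_continuous_on K \<phi>"
    using compact_uniformly_continuous[OF continuous_on_subset[OF cont] K] by simp
  moreover have "0 < \<delta>/4"
    using \<delta> by simp
  ultimately obtain \<eta> where \<eta>: "0 < \<eta>"
    and uc: "\<And>y z. y \<in> K \<Longrightarrow> z \<in> K \<Longrightarrow> dist y z < \<eta> \<Longrightarrow> \<bar>\<phi> y - \<phi> z\<bar> < \<delta>/4"
    unfolding uniformly_continuous_on_def dist_real_def by metis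
  obtain n \<rho> where \<rho>: "0 < \<rho>" "\<rho> \<le> \<eta>" "real n * \<rho> \<le> \<delta>/4" "2 * M \<le> real n * (\<eta> - \<rho>)"
    using cone_slope_exists[OF \<eta> \<delta>] by blast
  obtain F where F: "F \<subseteq> K" "finite F" "K \<subseteq> (\<Union>y\<in>F. ball y \<rho>)"
    using compactE_image[OF K, of K "\<lambda>y. ball y \<rho>"] \<rho>(1) by force
  obtain ys where ys: "set ys = F"
    using finite_list[OF F(2)] by blast
  have "\<exists>i. dist (xs i) y < \<rho>" for y
    using closure_approachable[of y "range xs"] dense \<rho>(1) by auto
  then obtain j where j: "\<And>y. dist (xs (j y)) y < \<rho>"
    by metis
  have "\<exists>r::rat. \<phi> y < real_of_rat r \<and> real_of_rat r < \<phi> y + \<delta>/4" for y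
    using of_rat_dense[of "\<phi> y" "\<phi> y + \<delta>/4"] \<delta> by simp
  then obtain q where q: "\<And>y. \<phi> y < real_of_rat (q y) \<and> real_of_rat (q y) < \<phi> y + \<delta>/4"
    by metis
  show thesis
  proof
    show "\<bar>\<phi> \<omega> - cone_approx xs (c, n, map (\<lambda>y. (j y, q y)) ys) \<omega>\<bar> \<le> \<delta>" if "\<omega> \<in> K" for \<omega>
      using F(1,3) ys
      by (intro cone_approx_close_on_compact[OF bnd c(1) \<delta> uc \<rho>(2-4) _ _ j q that])
        (auto simp: subset_eq)
    show "\<bar>cone_approx xs (c, n, map (\<lambda>y. (j y, q y)) ys) \<omega>\<bar> \<le> M + 1" for \<omega>
      using abs_cone_approx_le c(2) by (rule order_trans)
  qed
qed

section \<open>Expectations dominated by a tight sublinear expectation\<close>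

lemma Bb_I: "f \<in> borel_measurable borel \<Longrightarrow> (\<And>\<omega>. \<bar>f \<omega>\<bar> \<le> B) \<Longrightarrow> f \<in> Bb"
  unfolding Bb_def bounded_iff by auto

lemma Cb_boundE:
  assumes "X \<in> Cb"
  obtains M where "0 \<le> M" "\<And>\<omega>. \<bar>X \<omega>\<bar> \<le> M"
  using assms unfolding Cb_def bounded_iff by (auto intro: order_trans[OF abs_ge_zero])

lemma const_in_Cb: "(\<lambda>_. c) \<in> Cb"
  unfolding Cb_def by (auto simp: continuous_on_const)

lemma Cb_diff: "X \<in> Cb \<Longrightarrow> Y \<in> Cb \<Longrightarrow> (\<lambda>\<omega>. X \<omega> - Y \<omega>) \<in> Cb"
proof -
  assume X: "X \<in> Cb" and Y: "Y \<in> Cb"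
  obtain MX MY where "\<And>\<omega>. \<bar>X \<omega>\<bar> \<le> MX" "\<And>\<omega>. \<bar>Y \<omega>\<bar> \<le> MY"
    using Cb_boundE[OF X] Cb_boundE[OF Y] by metis
  then have "\<bar>X \<omega> - Y \<omega>\<bar> \<le> MX + MY" for \<omega>
    by (meson abs_triangle_ineq4 add_mono order_trans)
  then show ?thesis
    using X Y unfolding Cb_def bounded_iff by (auto intro: continuous_on_diff)
qed

lemma Cb_subset_Bb: "Cb \<subseteq> Bb"
  unfolding Cb_def Bb_def by (auto intro: borel_measurable_continuous_onI)

lemma nonlinear_expectation_const: "nonlinear_expectation H E \<Longrightarrow> E (\<lambda>_. c) = c"
  unfolding nonlinear_expectation_def by blast

lemma nonlinear_expectation_mono:
  "nonlinear_expectation H E \<Longrightarrow> X \<in> H \<Longrightarrow> Y \<in> H \<Longrightarrow> (\<And>\<omega>. X \<omega> \<le> Y \<omega>) \<Longrightarrow> E X \<le> E Y"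
  unfolding nonlinear_expectation_def by blast

lemma sublinear_expectation_nonlinear:
  "sublinear_expectation H E \<Longrightarrow> nonlinear_expectation H E"
  unfolding sublinear_expectation_def by blast

lemma sublinear_expectation_add:
  "sublinear_expectation H E \<Longrightarrow> X \<in> H \<Longrightarrow> Y \<in> H \<Longrightarrow> E (\<lambda>\<omega>. X \<omega> + Y \<omega>) \<le> E X + E Y"
  unfolding sublinear_expectation_def by blast

lemma sublinear_expectation_scale:
  "sublinear_expectation H E \<Longrightarrow> X \<in> H \<Longrightarrow> 0 \<le> c \<Longrightarrow> E (\<lambda>\<omega>. c * X \<omega>) = c * E X"
  unfolding sublinear_expectation_def by blast

lemma nonlinear_expectation_abs_le:
  assumes E: "nonlinear_expectation Cb E" and X: "X \<in> Cb" and bnd: "\<And>\<omega>. \<bar>X \<omega>\<bar> \<le> M"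
  shows "\<bar>E X\<bar> \<le> M"
proof -
  have "X \<omega> \<le> M" "- M \<le> X \<omega>" for \<omega>
    using bnd[of \<omega>] by linarith+
  then have "E X \<le> E (\<lambda>_. M)" "E (\<lambda>_. - M) \<le> E X"
    by (auto intro!: nonlinear_expectation_mono[OF E] X const_in_Cb)
  then show ?thesis
    unfolding nonlinear_expectation_const[OF E] by linarith
qed

lemma Bseq_nonlinear_expectation:
  assumes E: "\<And>n. nonlinear_expectation Cb (E n)" and X: "X \<in> Cb"
  shows "Bseq (\<lambda>n. E n X)"
proof -
  obtain M where "\<And>\<omega>. \<bar>X \<omega>\<bar> \<le> M"
    using Cb_boundE[OF X] by blast
  then have "\<bar>E n X\<bar> \<le> M" for n
    by (rule nonlinear_expectation_abs_le[OF E X])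
  then show ?thesis
    by (intro BseqI') simp
qed

lemma sublinear_expectation_le_off_set:
  assumes sublin: "sublinear_expectation Bb Ehat" and Z: "Z \<in> Bb" and K: "K \<in> sets borel"
    and "0 \<le> B" and on_K: "\<And>\<omega>. \<omega> \<in> K \<Longrightarrow> Z \<omega> \<le> \<delta>" and off_K: "\<And>\<omega>. Z \<omega> \<le> \<delta> + B"
  shows "Ehat Z \<le> \<delta> + B * Ehat (indicator (- K))"
proof -
  have ind_meas: "indicator (- K) \<in> borel_measurable borel"
    using K by (intro borel_measurable_indicator) auto
  have const: "(\<lambda>_. \<delta>) \<in> Bb"
    by (intro Bb_I[of _ "\<bar>\<delta>\<bar>"]) auto
  have ind: "indicator (- K) \<in> Bb"
    using ind_meas by (intro Bb_I[of _ 1]) (auto simp: indicator_def)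
  have scaled_meas: "(\<lambda>\<omega>. B * indicator (- K) \<omega>) \<in> borel_measurable borel"
    using ind_meas by (rule borel_measurable_times[OF borel_measurable_const])
  have scaled: "(\<lambda>\<omega>. B * indicator (- K) \<omega>) \<in> Bb"
    using \<open>0 \<le> B\<close> by (intro Bb_I[OF scaled_meas, of B]) (simp add: indicator_def)
  have "(\<lambda>\<omega>. \<delta> + B * indicator (- K) \<omega>) \<in> borel_measurable borel"
    using scaled_meas by (rule borel_measurable_add[OF borel_measurable_const])
  then have "(\<lambda>\<omega>. \<delta> + B * indicator (- K) \<omega>) \<in> Bb"
    by (rule Bb_I[of _ "\<bar>\<delta>\<bar> + B"]) (use \<open>0 \<le> B\<close> in \<open>simp add: indicator_def abs_triangle_ineq[THEN order_trans]\<close>)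
  moreover have "Z \<omega> \<le> \<delta> + B * indicator (- K) \<omega>" for \<omega>
    using on_K off_K by (cases "\<omega> \<in> K") auto
  ultimately have "Ehat Z \<le> Ehat (\<lambda>\<omega>. \<delta> + B * indicator (- K) \<omega>)"
    by (intro nonlinear_expectation_mono[OF sublinear_expectation_nonlinear[OF sublin] Z])
  also have "\<dots> \<le> Ehat (\<lambda>_. \<delta>) + Ehat (\<lambda>\<omega>. B * indicator (- K) \<omega>)"
    by (rule sublinear_expectation_add[OF sublin const scaled])
  also have "\<dots> = \<delta> + B * Ehat (indicator (- K))"
    by (simp add: nonlinear_expectation_const[OF sublinear_expectation_nonlinear[OF sublin]]
        sublinear_expectation_scale[OF sublin ind \<open>0 \<le> B\<close>])
  finally show ?thesis .
qed

lemma dominated_expectation_diff_le: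
  assumes sublin: "sublinear_expectation Bb Ehat"
    and dom: "\<And>X Y. X \<in> Cb \<Longrightarrow> Y \<in> Cb \<Longrightarrow> E X - E Y \<le> Ehat (\<lambda>\<omega>. X \<omega> - Y \<omega>)"
    and X: "X \<in> Cb" and Y: "Y \<in> Cb" and K: "K \<in> sets borel" and "0 \<le> \<delta>"
    and close: "\<And>\<omega>. \<omega> \<in> K \<Longrightarrow> \<bar>X \<omega> - Y \<omega>\<bar> \<le> \<delta>" and far: "\<And>\<omega>. \<bar>X \<omega> - Y \<omega>\<bar> \<le> B"
  shows "\<bar>E X - E Y\<bar> \<le> \<delta> + B * Ehat (indicator (- K))"
proof -
  have "0 \<le> B"
    using far[of undefined] by linarith
  have one_sided: "E U - E V \<le> \<delta> + B * Ehat (indicator (- K))"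
    if U: "U \<in> Cb" and V: "V \<in> Cb" and UV: "\<And>\<omega>. \<bar>U \<omega> - V \<omega>\<bar> = \<bar>X \<omega> - Y \<omega>\<bar>" for U V
  proof -
    have "Ehat (\<lambda>\<omega>. U \<omega> - V \<omega>) \<le> \<delta> + B * Ehat (indicator (- K))"
    proof (rule sublinear_expectation_le_off_set[OF sublin _ K \<open>0 \<le> B\<close>])
      show "(\<lambda>\<omega>. U \<omega> - V \<omega>) \<in> Bb"
        using Cb_diff[OF U V] Cb_subset_Bb by blast
      show "U \<omega> - V \<omega> \<le> \<delta>" if "\<omega> \<in> K" for \<omega>
        using close[OF that] UV[of \<omega>] by linarith
      show "U \<omega> - V \<omega> \<le> \<delta> + B" for \<omega>
        using far[of \<omega>] UV[of \<omega>] \<open>0 \<le> \<delta>\<close> by linarith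
    qed
    then show ?thesis
      using dom[OF U V] by linarith
  qed
  show ?thesis
    using one_sided[OF X Y] one_sided[OF Y X] by (simp add: abs_minus_commute abs_le_iff)
qed

lemma uniform_cone_approx:
  fixes xs :: "nat \<Rightarrow> 'a::metric_space"
  assumes sublin: "sublinear_expectation Bb Ehat" and tight: "tight Ehat"
    and dense: "closure (range xs) = UNIV" and \<phi>: "\<phi> \<in> Cb" and \<epsilon>: "0 < \<epsilon>"
  obtains t where "\<And>E. (\<And>X Y. X \<in> Cb \<Longrightarrow> Y \<in> Cb \<Longrightarrow> E X - E Y \<le> Ehat (\<lambda>\<omega>. X \<omega> - Y \<omega>))
    \<Longrightarrow> \<bar>E \<phi> - E (cone_approx xs t)\<bar> < \<epsilon>"
proof -
  obtain M where "0 \<le> M" and M: "\<And>\<omega>. \<bar>\<phi> \<omega>\<bar> \<le> M"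
    using Cb_boundE[OF \<phi>] by blast
  obtain K where K: "compact K" and K_small: "Ehat (indicator (- K)) < \<epsilon> / (2 * (2 * M + 1))"
  proof -
    have "0 < \<epsilon> / (2 * (2 * M + 1))"
      using \<open>0 \<le> M\<close> \<epsilon> by simp
    then show thesis
      using tight that unfolding tight_def by blast
  qed
  have cont: "continuous_on UNIV \<phi>"
    using \<phi> unfolding Cb_def by blast
  have half: "0 < \<epsilon>/2"
    using \<epsilon> by simp
  obtain t where close: "\<And>\<omega>. \<omega> \<in> K \<Longrightarrow> \<bar>\<phi> \<omega> - cone_approx xs t \<omega>\<bar> \<le> \<epsilon>/2"
    and t_bnd: "\<And>\<omega>. \<bar>cone_approx xs t \<omega>\<bar> \<le> M + 1"
    using exists_cone_approx[OF dense cont M K half] by blast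
  have far: "\<bar>\<phi> \<omega> - cone_approx xs t \<omega>\<bar> \<le> 2 * M + 1" for \<omega>
    using M[of \<omega>] t_bnd[of \<omega>] by linarith
  have "(2 * M + 1) * Ehat (indicator (- K)) < (2 * M + 1) * (\<epsilon> / (2 * (2 * M + 1)))"
    by (rule mult_strict_left_mono[OF K_small]) (use \<open>0 \<le> M\<close> in linarith)
  also have "\<dots> = \<epsilon>/2"
    using \<open>0 \<le> M\<close> by (simp add: field_simps)
  finally have small: "(2 * M + 1) * Ehat (indicator (- K)) < \<epsilon>/2" .
  have estimate: "\<bar>E \<phi> - E (cone_approx xs t)\<bar> \<le> \<epsilon>/2 + (2 * M + 1) * Ehat (indicator (- K))"
    if dom: "\<And>X Y. X \<in> Cb \<Longrightarrow> Y \<in> Cb \<Longrightarrow> E X - E Y \<le> Ehat (\<lambda>\<omega>. X \<omega> - Y \<omega>)" for E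
    using K \<epsilon> by (intro dominated_expectation_diff_le[OF sublin dom \<phi> cone_approx_in_Cb _ _ close far])
      (auto intro: borel_compact)
  show thesis
  proof (rule that)
    fix E :: "('a \<Rightarrow> real) \<Rightarrow> real"
    assume "\<And>X Y. X \<in> Cb \<Longrightarrow> Y \<in> Cb \<Longrightarrow> E X - E Y \<le> Ehat (\<lambda>\<omega>. X \<omega> - Y \<omega>)"
    from estimate[OF this] small show "\<bar>E \<phi> - E (cone_approx xs t)\<bar> < \<epsilon>"
      by linarith
  qed
qed

theorem mainTheorem1:
  fixes A :: "'b set"
    and E :: "'b \<Rightarrow> (('a::polish_space \<Rightarrow> real) \<Rightarrow> real)"
    and Ehat :: "('a \<Rightarrow> real) \<Rightarrow> real"
  assumes nonlin: "\<And>\<alpha>. \<alpha> \<in> A \<Longrightarrow> nonlinear_expectation Cb (E \<alpha>)"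
    and sublin: "sublinear_expectation Bb Ehat"
    and tight: "tight Ehat"
    and dom: "\<And>\<alpha> X Y. \<alpha> \<in> A \<Longrightarrow> X \<in> Cb \<Longrightarrow> Y \<in> Cb \<Longrightarrow>
                 E \<alpha> X - E \<alpha> Y \<le> Ehat (\<lambda>\<omega>. X \<omega> - Y \<omega>)"
  shows "\<forall>a::nat \<Rightarrow> 'b. (\<forall>n. a n \<in> A) \<longrightarrow>
           (\<exists>r. strict_mono r \<and> (\<forall>\<phi>\<in>Cb. Cauchy (\<lambda>i. E (a (r i)) \<phi>)))"
proof (intro allI impI)
  fix a :: "nat \<Rightarrow> 'b" assume a: "\<forall>n. a n \<in> A"
  obtain xs :: "nat \<Rightarrow> 'a" where dense: "closure (range xs) = UNIV"
    by (rule dense_sequence_exists)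
  show "\<exists>r. strict_mono r \<and> (\<forall>\<phi>\<in>Cb. Cauchy (\<lambda>i. E (a (r i)) \<phi>))"
  proof (rule Cauchy_subseq_if_uniformly_approximable[where d = "\<lambda>k. cone_approx xs (from_nat k)"])
    show "Bseq (\<lambda>m. E (a m) (cone_approx xs (from_nat k)))" for k
      using a nonlin by (intro Bseq_nonlinear_expectation cone_approx_in_Cb) auto
  next
    fix \<phi> :: "'a \<Rightarrow> real" and \<epsilon> :: real assume \<phi>: "\<phi> \<in> Cb" and \<epsilon>: "0 < \<epsilon>"
    obtain t where t: "\<And>E. (\<And>X Y. X \<in> Cb \<Longrightarrow> Y \<in> Cb \<Longrightarrow> E X - E Y \<le> Ehat (\<lambda>\<omega>. X \<omega> - Y \<omega>))
        \<Longrightarrow> \<bar>E \<phi> - E (cone_approx xs t)\<bar> < \<epsilon>"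
      by (rule uniform_cone_approx[OF sublin tight dense \<phi> \<epsilon>]) (rule that, blast)
    have "\<bar>E (a m) \<phi> - E (a m) (cone_approx xs t)\<bar> < \<epsilon>" for m
      using a by (intro t dom) auto
    then show "\<exists>k. \<forall>m. \<bar>E (a m) \<phi> - E (a m) (cone_approx xs (from_nat k))\<bar> < \<epsilon>"
      by (metis from_nat_to_nat)
  qed
qed

end
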